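(* Let $a,d,b,k\in\mathbb{P}$ with $\gcd(a,d)=1$, $b\geq 2$ and $a\geq k-1$, and let $$A=\left(a,\ ba+d,\ b^2a+\tfrac{b^2-1}{b-1}d,\ \dots,\ b^ka+\tfrac{b^k-1}{b-1}d\right).$$ Then $$F(A)=\left((b-1)a-b+d+S_{a-1}\right)a-d,\qquad g(A)=\sum_{r=1}^{a-1}S_r+\frac{(a-1)\big((b-1)a+d-1\big)}{2},$$ where $S_r=\sum_{i=1}^k x_i$ for $(x_1,\dots,x_k)$ the greedy presentation of $r$ (in particular $x_k=\lfloor (b-1)r/(b^k-1)\rfloor$).
   Context: $\mathbb{P}$ denotes the positive integers, $\mathbb{N}$ the nonnegative integers. $\langle A\rangle$ is the numerical semigroup of all $\mathbb{N}$-linear combinations of entries of $A$; $F(A)$ is the largest integer not in $\langle A\rangle$ and $g(A)$ is the number of positive integers not in $\langle A\rangle$. Let $B_i=\frac{b^i-1}{b-1}$. The greedy presentation of $r\in\mathbb{N}$ is the tuple $(x_1,\dots,x_k)\in\mathbb{N}^k$ with $\sum_i B_i x_i=r$ obtained by the greedy algorithm (take $x_k$ maximal, then $x_{k-1}$ maximal for the remainder, etc.); equivalently $x_k=\lfloor (b-1)r/(b^k-1)\rfloor$, $x_i\in\{0,\dots,b\}$ for $i\le k-1$, and if $2\le i\le k-1$ and $x_i=b$ then $x_1=\dots=x_{i-1}=0$. *)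

theory Defs
  imports Complex_Main
begin

definition gen_semigroup :: "nat list \<Rightarrow> nat set" where
  "gen_semigroup A = {n. \<exists>c :: nat \<Rightarrow> nat. n = (\<Sum>i<length A. c i * A ! i)}"

definition frobenius :: "nat list \<Rightarrow> int" where
  "frobenius A = (GREATEST z :: int. z \<notin> int ` gen_semigroup A)"

definition genus :: "nat list \<Rightarrow> nat" where
  "genus A = card {n :: nat. 0 < n \<and> n \<notin> gen_semigroup A}"

definition Bnum :: "nat \<Rightarrow> nat \<Rightarrow> nat" where
  "Bnum b i = (b ^ i - 1) div (b - 1)"

text \<open>Greedy presentation of r with respect to B_1, ..., B_k:
  greedy b k r i is the coordinate x_i (for 1 <= i <= k).
  x_k = r div B_k (maximal), then recurse on the remainder.\<close>
fun greedy :: "nat \<Rightarrow> nat \<Rightarrow> nat \<Rightarrow> nat \<Rightarrow> nat" where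
  "greedy b 0 r i = 0"
| "greedy b (Suc k) r i =
     (if i = Suc k then r div Bnum b (Suc k)
      else greedy b k (r mod Bnum b (Suc k)) i)"

definition Ssum :: "nat \<Rightarrow> nat \<Rightarrow> nat \<Rightarrow> nat" where
  "Ssum b k r = (\<Sum>i = 1..k. greedy b k r i)"

definition gens :: "nat \<Rightarrow> nat \<Rightarrow> nat \<Rightarrow> nat \<Rightarrow> nat list" where
  "gens a d b k = map (\<lambda>i. b ^ i * a + Bnum b i * d) [0..<k+1]"

end

theory Submission
  imports Defs "HOL-Number_Theory.Cong"
begin

text \<open>
  Since \<open>b\<^sup>i = (b - 1) B\<^sub>i + 1\<close>, a combination \<open>\<Sum> c\<^sub>i (b\<^sup>i a + B\<^sub>i d)\<close> equals
  \<open>(c\<^sub>0 + (b - 1) R + \<Sum>\<^sub>i\<^sub>\<ge>\<^sub>1 c\<^sub>i) a + R d\<close> with \<open>R = \<Sum>\<^sub>i\<^sub>\<ge>\<^sub>1 c\<^sub>i B\<^sub>i\<close>. The greedy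
  presentation of \<open>R\<close> has the fewest parts, so \<open>n \<in> \<langle>A\<rangle>\<close> iff \<open>n = m a + R d\<close> with
  \<open>m \<ge> (b - 1) R + S\<^sub>R\<close>. Replacing \<open>R\<close> by \<open>R mod a\<close> only weakens this bound, so the Apery
  set of \<open>\<langle>A\<rangle>\<close> with respect to \<open>a\<close> consists of \<open>w\<^sub>r = ((b - 1) r + S\<^sub>r) a + r d\<close>,
  \<open>r < a\<close>; these lie in distinct residue classes because \<open>gcd a d = 1\<close>. Selmer's formulas
  \<open>F = max w\<^sub>r - a\<close> and \<open>g = \<Sum> \<lfloor>w\<^sub>r / a\<rfloor>\<close>, the monotonicity of \<open>w\<close>, and
  \<open>\<Sum>\<^sub>r\<^sub><\<^sub>a \<lfloor>r d / a\<rfloor> = (a - 1)(d - 1)/2\<close> give the result.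
\<close>

section \<open>Apery sets and Selmer's formulas\<close>

lemma zero_mem_gen_semigroup: "0 \<in> gen_semigroup A"
  unfolding gen_semigroup_def by (auto intro: exI[of _ "\<lambda>_. 0"])

text \<open>\<open>w\<close> enumerates the Apery set \<open>{s \<in> S. s - a \<notin> S}\<close> of \<open>S = \<langle>A\<rangle>\<close> with respect to \<open>a\<close>.\<close>
locale apery_set =
  fixes A :: "nat list" and a :: nat and w :: "nat \<Rightarrow> nat"
  assumes modulus_pos: "0 < a"
    and residues_inj: "inj_on (\<lambda>r. w r mod a) {..<a}"
    and gen_semigroup_eq: "gen_semigroup A = {w r + t * a | r t. r < a}"
begin

lemma residue_surj: "\<exists>r<a. w r mod a = n mod a"
proof -
  have "(\<lambda>r. w r mod a) ` {..<a} = {..<a}"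
    using modulus_pos by (intro endo_inj_surj residues_inj) auto
  moreover have "n mod a \<in> {..<a}"
    using modulus_pos by simp
  ultimately have "n mod a \<in> (\<lambda>r. w r mod a) ` {..<a}"
    by simp
  then show ?thesis
    by force
qed

lemma mem_gen_semigroup_iff:
  assumes "r < a" and "w r mod a = n mod a"
  shows "n \<in> gen_semigroup A \<longleftrightarrow> w r \<le> n"
proof
  assume "n \<in> gen_semigroup A"
  then obtain r' t where "r' < a" and n: "n = w r' + t * a"
    by (auto simp: gen_semigroup_eq)
  then have "r' = r"
    using assms residues_inj by (auto dest: inj_onD)
  then show "w r \<le> n"
    using n by simp
next
  assume "w r \<le> n"
  then obtain t where "n = w r + a * t"
    using mod_eq_nat1E[OF assms(2)[symmetric]] by blast
  then have "n = w r + t * a"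
    by (simp add: mult.commute)
  then show "n \<in> gen_semigroup A"
    using assms(1) by (auto simp: gen_semigroup_eq)
qed

lemma gaps_eq:
  "{n. 0 < n \<and> n \<notin> gen_semigroup A}
     = (\<lambda>(r, t). w r - t * a) ` (SIGMA r:{..<a}. {1..w r div a})"
proof (intro equalityI subsetI)
  fix n assume "n \<in> {n. 0 < n \<and> n \<notin> gen_semigroup A}"
  then have "n \<notin> gen_semigroup A" by simp
  obtain r where r: "r < a" "w r mod a = n mod a"
    using residue_surj by blast
  then have "n < w r"
    using \<open>n \<notin> gen_semigroup A\<close> mem_gen_semigroup_iff[OF r] by simp
  then obtain t where t: "w r = n + a * t"
    using mod_eq_nat1E[OF r(2)] by (meson less_imp_le)
  then have "1 \<le> t"
    using \<open>n < w r\<close> by (cases t) auto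
  moreover have "t \<le> w r div a"
    using t modulus_pos by (simp add: less_eq_div_iff_mult_less_eq)
  moreover have "n = w r - t * a"
    using t \<open>n < w r\<close> by simp
  ultimately show "n \<in> (\<lambda>(r, t). w r - t * a) ` (SIGMA r:{..<a}. {1..w r div a})"
    using r(1) by (intro image_eqI[of _ _ "(r, t)"]) auto
next
  fix n assume "n \<in> (\<lambda>(r, t). w r - t * a) ` (SIGMA r:{..<a}. {1..w r div a})"
  then obtain r t where r: "r < a" and t: "1 \<le> t" "t * a \<le> w r" and n: "n = w r - t * a"
    using modulus_pos by (auto simp: less_eq_div_iff_mult_less_eq)
  then have "w r = n + t * a"
    by simp
  then have "w r mod a = n mod a"
    by simp
  moreover have "n < w r"
  proof -
    have "0 < t * a"
      using t(1) modulus_pos by simp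
    then show ?thesis
      using n t(2) by linarith
  qed
  ultimately have "n \<notin> gen_semigroup A"
    using r mem_gen_semigroup_iff by simp
  then show "n \<in> {n. 0 < n \<and> n \<notin> gen_semigroup A}"
    using zero_mem_gen_semigroup by (auto intro: gr0I)
qed

lemma gaps_inj: "inj_on (\<lambda>(r, t). w r - t * a) (SIGMA r:{..<a}. {1..w r div a})"
proof (rule inj_onI, clarsimp)
  fix r t r' t'
  assume r: "r < a" "r' < a" and t: "t \<le> w r div a" "t' \<le> w r' div a"
    and eq: "w r - t * a = w r' - t' * a"
  then have le: "t * a \<le> w r" "t' * a \<le> w r'"
    using modulus_pos by (auto simp: less_eq_div_iff_mult_less_eq)
  then have "w r = (w r - t * a) + t * a" "w r' = (w r' - t' * a) + t' * a"
    by simp_all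
  then have "w r mod a = w r' mod a"
    using eq by (metis mod_mult_self1)
  then have "r = r'"
    using r residues_inj by (auto dest: inj_onD)
  then have "t * a = t' * a"
    using eq le unfolding \<open>r = r'\<close> by linarith
  then show "r = r' \<and> t = t'"
    using \<open>r = r'\<close> modulus_pos by simp
qed

lemma genus_eq: "genus A = (\<Sum>r<a. w r div a)"
  unfolding genus_def gaps_eq card_image[OF gaps_inj] by simp

lemma frobenius_eq: "frobenius A = int (Max (w ` {..<a})) - int a"
  unfolding frobenius_def
proof (rule Greatest_equality)
  define M where "M = Max (w ` {..<a})"
  have w_le_M: "w r \<le> M" if "r < a" for r
    using that by (simp add: M_def)
  have "M \<in> w ` {..<a}"
    unfolding M_def using modulus_pos by (intro Max_in) auto
  then obtain rM where rM: "rM < a" "w rM = M"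
    by auto
  show "int M - int a \<notin> int ` gen_semigroup A"
  proof
    assume "int M - int a \<in> int ` gen_semigroup A"
    then obtain n where "int M - int a = int n" and "n \<in> gen_semigroup A"
      by auto
    then have "M = n + a" and "n \<in> gen_semigroup A"
      by linarith+
    then show False
      using mem_gen_semigroup_iff[OF rM(1), of n] rM(2) modulus_pos by simp
  qed
  fix y assume y: "y \<notin> int ` gen_semigroup A"
  obtain r1 where "r1 < a" "w r1 mod a = (a - 1) mod a"
    using residue_surj by blast
  then have "a - 1 \<le> M"
    using w_le_M[of r1] mod_less_eq_dividend[of "w r1" a] modulus_pos by simp
  show "y \<le> int M - int a"
  proof (cases "y < 0")
    case False
    then obtain n where n: "y = int n"
      by (cases y) auto
    obtain r where r: "r < a" "w r mod a = n mod a"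
      using residue_surj by blast
    then have "n < w r"
      using y n mem_gen_semigroup_iff[OF r] by auto
    then obtain t where t: "w r = n + a * t"
      using mod_eq_nat1E[OF r(2)] by (meson less_imp_le)
    then have "n + a \<le> w r"
      using \<open>n < w r\<close> by (cases t) auto
    then show ?thesis
      using n w_le_M[OF r(1)] by simp
  qed (use \<open>a - 1 \<le> M\<close> modulus_pos in linarith)
qed

end

section \<open>Greedy presentations\<close>

lemma power_eq_Bnum:
  assumes "1 < b"
  shows "b ^ i = (b - 1) * Bnum b i + 1"
proof -
  have "int (b ^ i - 1) = int ((b - 1) * (\<Sum>j<i. b ^ j))"
    using power_diff_1_eq[of "int b" i] assms by (simp add: of_nat_diff)
  then have geometric: "b ^ i - 1 = (b - 1) * (\<Sum>j<i. b ^ j)"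
    by (simp only: of_nat_eq_iff)
  then have Bnum_eq: "Bnum b i = (\<Sum>j<i. b ^ j)"
    using assms unfolding Bnum_def by simp
  have "1 \<le> b ^ i"
    using assms by simp
  then show ?thesis
    unfolding Bnum_eq using geometric by linarith
qed

lemma Bnum_0: "Bnum b 0 = 0"
  by (simp add: Bnum_def)

lemma Bnum_Suc:
  assumes "1 < b"
  shows "Bnum b (Suc i) = b * Bnum b i + 1"
proof -
  obtain c where b: "b = Suc c" and "0 < c"
    using assms by (cases b) auto
  have "c * Bnum b (Suc i) + 1 = b * (c * Bnum b i + 1)"
    using power_eq_Bnum[OF assms, of i] power_eq_Bnum[OF assms, of "Suc i"] b by simp
  also have "\<dots> = c * (b * Bnum b i + 1) + 1"
    unfolding b by (simp add: algebra_simps)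
  finally have "c * Bnum b (Suc i) = c * (b * Bnum b i + 1)"
    by simp
  then show ?thesis
    using \<open>0 < c\<close> by (metis mult_left_cancel not_gr0)
qed

lemma Bnum_1: "1 < b \<Longrightarrow> Bnum b (Suc 0) = 1"
  using Bnum_Suc[of b 0] by (simp add: Bnum_0)

lemma Bnum_pos: "1 < b \<Longrightarrow> 0 < i \<Longrightarrow> 0 < Bnum b i"
  by (cases i) (simp_all add: Bnum_Suc)

lemma Ssum_no_parts: "Ssum b 0 r = 0"
  by (simp add: Ssum_def)

lemma Ssum_Suc: "Ssum b (Suc k) r = r div Bnum b (Suc k) + Ssum b k (r mod Bnum b (Suc k))"
proof -
  have "Ssum b (Suc k) r = (\<Sum>i = 1..k. greedy b (Suc k) r i) + greedy b (Suc k) r (Suc k)"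
    by (simp add: Ssum_def)
  also have "(\<Sum>i = 1..k. greedy b (Suc k) r i) = Ssum b k (r mod Bnum b (Suc k))"
    unfolding Ssum_def by (rule sum.cong) auto
  finally show ?thesis
    by simp
qed

lemma Ssum_of_0: "Ssum b k 0 = 0"
  by (induction k) (simp_all add: Ssum_Suc Ssum_no_parts)

lemma sum_greedy_Bnum:
  assumes "1 < b" and "0 < k"
  shows "(\<Sum>i = 1..k. greedy b k r i * Bnum b i) = r"
  using assms(2)
proof (induction k arbitrary: r)
  case 0
  then show ?case by simp
next
  case (Suc k)
  let ?B = "Bnum b (Suc k)"
  have "(\<Sum>i = 1..k. greedy b (Suc k) r i * Bnum b i)
      = (\<Sum>i = 1..k. greedy b k (r mod ?B) i * Bnum b i)"
    by (rule sum.cong) auto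
  also have "\<dots> = r mod ?B"
    using Suc.IH assms(1) by (cases "k = 0") (simp_all add: Bnum_1)
  finally show ?case
    by (simp add: mod_div_mult_eq)
qed

lemma Ssum_add_top:
  assumes "1 < b"
  shows "Ssum b (Suc m) (x + j * Bnum b (Suc m)) = j + Ssum b (Suc m) x"
  using Bnum_pos[OF assms, of "Suc m"] by (simp add: Ssum_Suc)

text \<open>If \<open>Suc y\<close> is a multiple of \<open>B\<^sub>m\<^sub>+\<^sub>1 = b B\<^sub>m + 1\<close>, the \<open>b\<close> parts \<open>B\<^sub>m\<close> of
  \<open>y mod B\<^sub>m\<^sub>+\<^sub>1\<close> merge into a single part.\<close>
lemma Ssum_le_Suc:
  assumes "1 < b"
  shows "Ssum b m y \<le> Ssum b m (Suc y) + (b - 1)"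
proof (induction m arbitrary: y)
  case 0
  then show ?case by (simp add: Ssum_no_parts)
next
  case (Suc m)
  define B where "B = Bnum b (Suc m)"
  show ?case
  proof (cases "Suc (y mod B) = B")
    case False
    then have "Suc y mod B = Suc (y mod B)" "Suc y div B = y div B"
      by (auto simp: mod_Suc div_Suc)
    then show ?thesis
      using Suc.IH[of "y mod B"] unfolding Ssum_Suc B_def[symmetric] by simp
  next
    case True
    then have carry: "Suc y mod B = 0" "Suc y div B = Suc (y div B)"
      by (auto simp: mod_Suc div_Suc)
    have "Ssum b m (y mod B) \<le> b"
    proof (cases m)
      case 0
      then show ?thesis by (simp add: Ssum_no_parts)
    next
      case (Suc m')
      have "y mod B = 0 + b * Bnum b m"
        using True assms by (simp add: B_def Bnum_Suc)
      then show ?thesis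
        using Ssum_add_top[OF assms, of m' 0 b] Suc by (simp add: Ssum_of_0)
    qed
    then show ?thesis
      using carry assms unfolding Ssum_Suc B_def[symmetric] by (simp add: Ssum_of_0)
  qed
qed

text \<open>Since \<open>B\<^sub>m\<^sub>+\<^sub>1 = b B\<^sub>m + 1\<close>, adding \<open>B\<^sub>m\<^sub>+\<^sub>1\<close> adds \<open>b\<close> parts \<open>B\<^sub>m\<close>,
  while the extra \<open>1\<close> saves at most \<open>b - 1\<close> parts.\<close>
lemma Ssum_add_Bnum_Suc:
  assumes "1 < b" and "0 < m"
  shows "Ssum b m x + j \<le> Ssum b m (x + j * Bnum b (Suc m))"
proof (induction j)
  case 0
  then show ?case by simp
next
  case (Suc j)
  obtain m' where m: "m = Suc m'"
    using assms(2) by (cases m) auto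
  define y where "y = x + j * Bnum b (Suc m)"
  have "x + Suc j * Bnum b (Suc m) = Suc y + b * Bnum b m"
    using Bnum_Suc[OF assms(1), of m] by (simp add: y_def)
  then have "Ssum b m (x + Suc j * Bnum b (Suc m)) = b + Ssum b m (Suc y)"
    using Ssum_add_top[OF assms(1), of m' "Suc y" b] m by (simp add: mult.commute)
  moreover have "Ssum b m y \<le> Ssum b m (Suc y) + (b - 1)"
    by (rule Ssum_le_Suc[OF assms(1)])
  ultimately show ?case
    using Suc.IH assms(1) by (simp add: y_def)
qed

lemma Ssum_le_sum_coeffs:
  assumes "1 < b"
  shows "Ssum b k (\<Sum>i = 1..k. c i * Bnum b i) \<le> (\<Sum>i = 1..k. c i)"
proof (induction k)
  case 0
  then show ?case by (simp add: Ssum_no_parts)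
next
  case (Suc k)
  define R where "R = (\<Sum>i = 1..k. c i * Bnum b i)"
  define B where "B = Bnum b (Suc k)"
  have "Ssum b (Suc k) (\<Sum>i = 1..Suc k. c i * Bnum b i) = Ssum b (Suc k) (R + c (Suc k) * B)"
    by (simp add: R_def B_def)
  also have "\<dots> = c (Suc k) + (R div B + Ssum b k (R mod B))"
    using Bnum_pos[OF assms, of "Suc k"] by (simp add: Ssum_Suc B_def)
  moreover have "R div B + Ssum b k (R mod B) \<le> Ssum b k R"
  proof (cases "k = 0")
    case True
    then show ?thesis by (simp add: R_def)
  next
    case False
    then show ?thesis
      using Ssum_add_Bnum_Suc[OF assms, of k "R mod B" "R div B"]
      by (simp add: B_def mod_div_mult_eq)
  qed
  moreover have "(\<Sum>i = 1..Suc k. c i) = (\<Sum>i = 1..k. c i) + c (Suc k)"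
    by simp
  ultimately show ?case
    using Suc.IH[folded R_def] by linarith
qed

lemma Ssum_le_self:
  assumes "1 < b" and "0 < k"
  shows "Ssum b k r \<le> r"
  using Ssum_le_sum_coeffs[OF assms(1), of k "\<lambda>i. if i = 1 then r else 0"] assms
  by (simp add: Bnum_1 if_distrib[of "\<lambda>x. x * _"] cong: if_cong)

section \<open>A sum of floors\<close>

lemma div_add_div_non_dvd:
  fixes x y a :: nat
  assumes "\<not> a dvd x" and "\<not> a dvd y" and "a dvd x + y"
  shows "x div a + y div a + 1 = (x + y) div a"
proof -
  have "0 < a"
    using assms by (metis add_is_0 dvd_0_left_iff gr0I)
  have pos: "0 < x mod a" "0 < y mod a"
    using assms(1,2) by (auto simp: dvd_eq_mod_eq_0)
  have "a dvd x mod a + y mod a"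
    using assms(3) by (simp add: mod_add_eq dvd_eq_mod_eq_0)
  then obtain q where q: "x mod a + y mod a = a * q"
    by (elim dvdE)
  moreover have "x mod a + y mod a < a * 2"
    using \<open>0 < a\<close> mod_less_divisor[of a x] mod_less_divisor[of a y] by linarith
  ultimately have "q = 1"
    using pos \<open>0 < a\<close> by (cases q) auto
  then show ?thesis
    using q \<open>0 < a\<close> by (simp add: div_add1_eq)
qed

lemma sum_mult_div_coprime:
  fixes a d :: nat
  assumes "coprime a d"
  shows "2 * (\<Sum>r<a. r * d div a) = (a - 1) * (d - 1)"
proof -
  let ?f = "\<lambda>r. r * d div a"
  have not_dvd: "\<not> a dvd r * d" if "0 < r" "r < a" for r
    using that assms by (simp add: coprime_dvd_mult_left_iff nat_dvd_not_less)
  have pair: "?f r + ?f (a - r) = d - 1" if "0 < r" "r < a" for r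
  proof -
    have sum_eq: "r * d + (a - r) * d = a * d"
      using that by (simp add: add_mult_distrib[symmetric])
    have "?f r + ?f (a - r) + 1 = (r * d + (a - r) * d) div a"
      using that not_dvd[of r] not_dvd[of "a - r"] sum_eq by (intro div_add_div_non_dvd) auto
    also have "\<dots> = d"
      using that sum_eq by simp
    finally show ?thesis
      by simp
  qed
  have "(\<Sum>r<a. ?f r) = (\<Sum>r\<in>{1..<a}. ?f r)"
    by (rule sum.mono_neutral_right) (auto simp: not_less_eq_eq)
  moreover have "(\<Sum>r\<in>{1..<a}. ?f r) = (\<Sum>r\<in>{1..<a}. ?f (a - r))"
    using sum.atLeastLessThan_rev[of ?f 1 a] by simp
  ultimately have "2 * (\<Sum>r<a. ?f r) = (\<Sum>r\<in>{1..<a}. ?f r + ?f (a - r))"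
    by (simp add: sum.distrib)
  also have "\<dots> = (\<Sum>r\<in>{1..<a}. d - 1)"
    using pair by (intro sum.cong) auto
  finally show ?thesis
    by simp
qed

section \<open>The semigroup generated by \<^const>\<open>gens\<close>\<close>

lemma gens_combination:
  assumes "1 < b"
  shows "(\<Sum>i<length (gens a d b k). c i * gens a d b k ! i)
     = (c 0 + (b - 1) * (\<Sum>i = 1..k. c i * Bnum b i) + (\<Sum>i = 1..k. c i)) * a
       + (\<Sum>i = 1..k. c i * Bnum b i) * d"
proof -
  have split0: "{..<Suc k} = insert 0 {1..k}"
    by auto
  have "(\<Sum>i<length (gens a d b k). c i * gens a d b k ! i)
      = (\<Sum>i<Suc k. c i * (b ^ i * a + Bnum b i * d))"
    unfolding gens_def by (intro sum.cong) (auto simp del: upt_Suc)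
  also have "\<dots> = (\<Sum>i<Suc k. c i * b ^ i) * a + (\<Sum>i<Suc k. c i * Bnum b i) * d"
    by (simp only: distrib_left sum.distrib sum_distrib_right mult.assoc)
  also have "(\<Sum>i<Suc k. c i * Bnum b i) = (\<Sum>i = 1..k. c i * Bnum b i)"
    unfolding split0 by (simp add: Bnum_0)
  also have "(\<Sum>i<Suc k. c i * b ^ i) = c 0 + (\<Sum>i = 1..k. c i * ((b - 1) * Bnum b i + 1))"
    unfolding split0 power_eq_Bnum[OF assms] by (simp add: Bnum_0)
  also have "\<dots> = c 0 + (b - 1) * (\<Sum>i = 1..k. c i * Bnum b i) + (\<Sum>i = 1..k. c i)"
    by (simp add: algebra_simps sum.distrib sum_distrib_left)
  finally show ?thesis .
qed

lemma gen_semigroup_gens: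
  assumes "1 < b" and "0 < k"
  shows "gen_semigroup (gens a d b k) = {m * a + R * d | m R. (b - 1) * R + Ssum b k R \<le> m}"
proof (intro equalityI subsetI)
  fix n assume "n \<in> gen_semigroup (gens a d b k)"
  then obtain c where n: "n = (\<Sum>i<length (gens a d b k). c i * gens a d b k ! i)"
    unfolding gen_semigroup_def by blast
  define R where "R = (\<Sum>i = 1..k. c i * Bnum b i)"
  have "Ssum b k R \<le> (\<Sum>i = 1..k. c i)"
    unfolding R_def by (rule Ssum_le_sum_coeffs[OF assms(1)])
  then show "n \<in> {m * a + R * d | m R. (b - 1) * R + Ssum b k R \<le> m}"
    using n gens_combination[OF assms(1), where a=a and d=d and k=k and c=c]
    unfolding R_def[symmetric]
    by (intro CollectI exI[of _ "c 0 + (b - 1) * R + (\<Sum>i = 1..k. c i)"] exI[of _ R]) auto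
next
  fix n assume "n \<in> {m * a + R * d | m R. (b - 1) * R + Ssum b k R \<le> m}"
  then obtain m R where n: "n = m * a + R * d" and le: "(b - 1) * R + Ssum b k R \<le> m"
    by blast
  define c where "c i = (if i = 0 then m - ((b - 1) * R + Ssum b k R) else greedy b k R i)" for i
  have "(\<Sum>i = 1..k. c i * Bnum b i) = R"
    using sum_greedy_Bnum[OF assms, of R] by (simp add: c_def)
  moreover have "(\<Sum>i = 1..k. c i) = Ssum b k R"
    by (simp add: c_def Ssum_def)
  ultimately have "n = (\<Sum>i<length (gens a d b k). c i * gens a d b k ! i)"
    unfolding gens_combination[OF assms(1)] n using le by (simp add: c_def)
  then show "n \<in> gen_semigroup (gens a d b k)"
    unfolding gen_semigroup_def by blast
qed

definition apery_gens :: "nat \<Rightarrow> nat \<Rightarrow> nat \<Rightarrow> nat \<Rightarrow> nat \<Rightarrow> nat" where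
  "apery_gens a d b k r = ((b - 1) * r + Ssum b k r) * a + r * d"

lemma gen_semigroup_gens_apery:
  assumes "0 < a" and "1 < b" and "0 < k"
  shows "gen_semigroup (gens a d b k) = {apery_gens a d b k r + t * a | r t. r < a}"
proof -
  have "\<exists>r t. m * a + R * d = apery_gens a d b k r + t * a \<and> r < a"
    if le: "(b - 1) * R + Ssum b k R \<le> m" for m R
  proof -
    define r where "r = R mod a"
    define j where "j = R div a"
    have R: "R = r + j * a"
      by (simp add: r_def j_def)
    have "(b - 1) * r + Ssum b k r \<le> (b - 1) * R + Ssum b k R"
    proof (cases "j = 0")
      case False
      have "Ssum b k r < a"
        using Ssum_le_self[OF assms(2,3), of r] mod_less_divisor[OF assms(1), of R]
        unfolding r_def by linarith
      also have "a \<le> (b - 1) * (j * a)"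
        using False assms(2) by (simp add: Suc_le_eq)
      finally show ?thesis
        unfolding R by (simp add: algebra_simps)
    qed (simp add: R)
    then obtain t where t: "m + j * d = (b - 1) * r + Ssum b k r + t"
      using le by (metis le_add1 le_trans le_Suc_ex)
    have "m * a + R * d = (m + j * d) * a + r * d"
      unfolding R by (simp add: algebra_simps)
    also have "\<dots> = apery_gens a d b k r + t * a"
      unfolding t apery_gens_def by (simp add: algebra_simps)
    finally show ?thesis
      using assms(1) by (auto simp: r_def)
  qed
  moreover have "\<exists>m R. apery_gens a d b k r + t * a = m * a + R * d
      \<and> (b - 1) * R + Ssum b k R \<le> m" for r t
    by (intro exI[of _ "(b - 1) * r + Ssum b k r + t"] exI[of _ r])
      (simp add: apery_gens_def algebra_simps)
  ultimately show ?thesis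
    unfolding gen_semigroup_gens[OF assms(2,3)] by blast
qed

lemma mono_apery_gens:
  assumes "1 < b"
  shows "mono (apery_gens a d b k)"
proof (rule mono_iff_le_Suc[THEN iffD2], rule allI)
  fix r
  have "(b - 1) * Suc r = (b - 1) * r + (b - 1)"
    by simp
  then have le: "(b - 1) * r + Ssum b k r \<le> (b - 1) * Suc r + Ssum b k (Suc r)"
    using Ssum_le_Suc[OF assms, of k r] by linarith
  show "apery_gens a d b k r \<le> apery_gens a d b k (Suc r)"
    unfolding apery_gens_def by (rule add_mono[OF mult_right_mono[OF le]]) auto
qed

lemma inj_on_mult_mod:
  fixes a d :: nat
  assumes "coprime a d"
  shows "inj_on (\<lambda>r. r * d mod a) {..<a}"
proof (rule inj_onI)
  fix r r' assume "r \<in> {..<a}" "r' \<in> {..<a}" "r * d mod a = r' * d mod a"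
  then have "[r = r'] (mod a)"
    using assms by (simp add: cong_def[symmetric] cong_mult_rcancel_nat coprime_commute)
  then show "r = r'"
    using \<open>r \<in> {..<a}\<close> \<open>r' \<in> {..<a}\<close> by (simp add: cong_less_imp_eq_nat)
qed

lemma apery_set_gens:
  assumes "0 < a" and "0 < k" and "coprime a d" and "1 < b"
  shows "apery_set (gens a d b k) a (apery_gens a d b k)"
proof
  show "inj_on (\<lambda>r. apery_gens a d b k r mod a) {..<a}"
    using inj_on_mult_mod[OF assms(3)] by (simp add: apery_gens_def)
qed (use assms gen_semigroup_gens_apery in auto)

lemma frobenius_gens:
  assumes "0 < a" and "0 < k" and "coprime a d" and "1 < b"
  shows "frobenius (gens a d b k) = int (apery_gens a d b k (a - 1)) - int a"
proof -
  have "Max (apery_gens a d b k ` {..<a}) = apery_gens a d b k (a - 1)"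
    using assms(1) monoD[OF mono_apery_gens[OF assms(4), where a=a and d=d and k=k]]
    by (intro Max_eqI) auto
  then show ?thesis
    using apery_set.frobenius_eq[OF apery_set_gens[OF assms]] by simp
qed

lemma genus_gens:
  assumes "0 < a" and "0 < k" and "coprime a d" and "1 < b"
  shows "2 * genus (gens a d b k)
    = (b - 1) * (a * (a - 1)) + 2 * (\<Sum>r = 1..a - 1. Ssum b k r) + (a - 1) * (d - 1)"
proof -
  have "genus (gens a d b k) = (\<Sum>r<a. apery_gens a d b k r div a)"
    using apery_set.genus_eq[OF apery_set_gens[OF assms]] .
  also have "\<dots> = (\<Sum>r<a. (b - 1) * r + Ssum b k r + r * d div a)"
    using assms(1) by (intro sum.cong) (simp_all add: apery_gens_def)
  also have "\<dots> = (b - 1) * (\<Sum>r<a. r) + (\<Sum>r<a. Ssum b k r) + (\<Sum>r<a. r * d div a)"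
    by (simp add: sum.distrib sum_distrib_left)
  finally have "2 * genus (gens a d b k)
    = (b - 1) * (2 * (\<Sum>r<a. r)) + 2 * (\<Sum>r<a. Ssum b k r) + 2 * (\<Sum>r<a. r * d div a)"
    by simp
  moreover have "2 * (\<Sum>r<a. r) = a * (a - 1)"
    using double_gauss_sum[where 'a = nat, of "a - 1"] assms(1)
    by (simp add: atLeast0AtMost lessThan_Suc_atMost[symmetric])
  moreover have "(\<Sum>r<a. Ssum b k r) = (\<Sum>r = 1..a - 1. Ssum b k r)"
    using assms(1) by (intro sum.mono_neutral_right) (auto simp: Ssum_of_0 Suc_le_eq)
  ultimately show ?thesis
    using sum_mult_div_coprime[OF assms(3)] by simp
qed

theorem theorem3p5:
  fixes a d b k :: nat
  assumes "0 < a" and "0 < d" and "0 < k"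
    and "gcd a d = 1" and "2 \<le> b" and "k - 1 \<le> a"
  shows "frobenius (gens a d b k)
           = ((int b - 1) * int a - int b + int d + int (Ssum b k (a - 1))) * int a - int d
         \<and> real (genus (gens a d b k))
           = real (\<Sum>r = 1..a - 1. Ssum b k r)
             + real (a - 1) * ((real b - 1) * real a + real d - 1) / 2"
proof
  have hyps: "0 < a" "0 < k" "coprime a d" "1 < b"
    using assms by (simp_all add: coprime_iff_gcd_eq_1)
  have "int (apery_gens a d b k (a - 1))
      = ((int b - 1) * (int a - 1) + int (Ssum b k (a - 1))) * int a + (int a - 1) * int d"
    using hyps unfolding apery_gens_def by (simp add: of_nat_diff)
  then show "frobenius (gens a d b k)
          = ((int b - 1) * int a - int b + int d + int (Ssum b k (a - 1))) * int a - int d"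
    unfolding frobenius_gens[OF hyps] by (simp add: algebra_simps)
  have "2 * real (genus (gens a d b k))
      = (real b - 1) * (real a * (real a - 1)) + 2 * real (\<Sum>r = 1..a - 1. Ssum b k r)
        + (real a - 1) * (real d - 1)"
    using arg_cong[OF genus_gens[OF hyps], of real] hyps assms(2) by (simp add: of_nat_diff)
  then show "real (genus (gens a d b k))
      = real (\<Sum>r = 1..a - 1. Ssum b k r)
        + real (a - 1) * ((real b - 1) * real a + real d - 1) / 2"
    using hyps by (simp add: of_nat_diff field_simps)
qed

end
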